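(* There exists a planar graph of girth 4 that does not belong to CBU.
   Context: Let $e_1,\ldots,e_d$ be the standard basis of $\mathbb{R}^d$. For $d\ge 1$, a graph belongs to $d$-CBU if one can assign to each vertex an axis-parallel box (product of $d$ closed intervals of positive length) in $\mathbb{R}^d$ such that the boxes have pairwise disjoint interiors, two distinct vertices are adjacent iff their boxes intersect, and any two intersecting boxes intersect in a $(d-1)$-dimensional box orthogonal to $e_1$. CBU denotes the union of the classes $d$-CBU over all $d\ge 1$. *)

theory Defs
  imports "HOL-Analysis.Analysis"
begin

definition simple_graph :: "'v set \<Rightarrow> ('v \<Rightarrow> 'v \<Rightarrow> bool) \<Rightarrow> bool" where
  "simple_graph V E \<longleftrightarrow> finite V \<and> (\<forall>u v. E u v \<longrightarrow> u \<in> V \<and> v \<in> V)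
     \<and> (\<forall>u v. E u v \<longrightarrow> E v u) \<and> (\<forall>u. \<not> E u u)"

definition has_cycle_len :: "'v set \<Rightarrow> ('v \<Rightarrow> 'v \<Rightarrow> bool) \<Rightarrow> nat \<Rightarrow> bool" where
  "has_cycle_len V E k \<longleftrightarrow> 3 \<le> k \<and> (\<exists>f :: nat \<Rightarrow> 'v. (\<forall>i<k. f i \<in> V) \<and> inj_on f {..<k}
     \<and> (\<forall>i<k. E (f i) (f ((i + 1) mod k))))"

definition girth_is :: "'v set \<Rightarrow> ('v \<Rightarrow> 'v \<Rightarrow> bool) \<Rightarrow> nat \<Rightarrow> bool" where
  "girth_is V E g \<longleftrightarrow> has_cycle_len V E g \<and> (\<forall>k<g. \<not> has_cycle_len V E k)"

definition planar :: "'v set \<Rightarrow> ('v \<Rightarrow> 'v \<Rightarrow> bool) \<Rightarrow> bool" where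
  "planar V E \<longleftrightarrow> (\<exists>(pos :: 'v \<Rightarrow> real \<times> real) (\<gamma> :: 'v \<Rightarrow> 'v \<Rightarrow> real \<Rightarrow> real \<times> real).
     inj_on pos V
     \<and> (\<forall>u v. E u v \<longrightarrow> arc (\<gamma> u v) \<and> pathstart (\<gamma> u v) = pos u \<and> pathfinish (\<gamma> u v) = pos v)
     \<and> (\<forall>u v w. E u v \<and> w \<in> V \<and> pos w \<in> path_image (\<gamma> u v) \<longrightarrow> w = u \<or> w = v)
     \<and> (\<forall>u v x y. E u v \<and> E x y \<and> {u, v} \<noteq> {x, y} \<longrightarrow>
          path_image (\<gamma> u v) \<inter> path_image (\<gamma> x y) \<subseteq> {pos u, pos v} \<inter> {pos x, pos y}))"

section \<open>Boxes in R^d (points as nat \<Rightarrow> real, zero outside coordinates 0..d-1; coordinate 0 is e_1)\<close>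

definition cbox_d :: "nat \<Rightarrow> (nat \<Rightarrow> real) \<Rightarrow> (nat \<Rightarrow> real) \<Rightarrow> (nat \<Rightarrow> real) set" where
  "cbox_d d a b = {x. (\<forall>i<d. a i \<le> x i \<and> x i \<le> b i) \<and> (\<forall>i. d \<le> i \<longrightarrow> x i = 0)}"

definition obox_d :: "nat \<Rightarrow> (nat \<Rightarrow> real) \<Rightarrow> (nat \<Rightarrow> real) \<Rightarrow> (nat \<Rightarrow> real) set" where
  "obox_d d a b = {x. (\<forall>i<d. a i < x i \<and> x i < b i) \<and> (\<forall>i. d \<le> i \<longrightarrow> x i = 0)}"

definition facet_box_e1 :: "nat \<Rightarrow> (nat \<Rightarrow> real) set \<Rightarrow> bool" where
  "facet_box_e1 d S \<longleftrightarrow> (\<exists>a b. a 0 = b 0 \<and> (\<forall>i. 1 \<le> i \<and> i < d \<longrightarrow> a i < b i) \<and> S = cbox_d d a b)"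

definition d_CBU :: "nat \<Rightarrow> 'v set \<Rightarrow> ('v \<Rightarrow> 'v \<Rightarrow> bool) \<Rightarrow> bool" where
  "d_CBU d V E \<longleftrightarrow> (\<exists>(lo :: 'v \<Rightarrow> nat \<Rightarrow> real) hi.
     (\<forall>v\<in>V. \<forall>i<d. lo v i < hi v i)
     \<and> (\<forall>u\<in>V. \<forall>v\<in>V. u \<noteq> v \<longrightarrow> obox_d d (lo u) (hi u) \<inter> obox_d d (lo v) (hi v) = {})
     \<and> (\<forall>u\<in>V. \<forall>v\<in>V. u \<noteq> v \<longrightarrow> (E u v \<longleftrightarrow> cbox_d d (lo u) (hi u) \<inter> cbox_d d (lo v) (hi v) \<noteq> {}))
     \<and> (\<forall>u\<in>V. \<forall>v\<in>V. u \<noteq> v \<and> cbox_d d (lo u) (hi u) \<inter> cbox_d d (lo v) (hi v) \<noteq> {} \<longrightarrow>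
          facet_box_e1 d (cbox_d d (lo u) (hi u) \<inter> cbox_d d (lo v) (hi v))))"

definition CBU :: "'v set \<Rightarrow> ('v \<Rightarrow> 'v \<Rightarrow> bool) \<Rightarrow> bool" where
  "CBU V E \<longleftrightarrow> (\<exists>d\<ge>1. d_CBU d V E)"

end

theory Submission
  imports Defs
begin

text \<open>
  Project the boxes of a CBU representation onto the first axis. Two adjacent boxes meet in a
  facet orthogonal to \<open>e\<^sub>1\<close>, so their projections \<open>[l, h]\<close> touch end to start: the upper end
  of one is the lower end of the other. No three intervals touch pairwise, hence a path of three
  touching intervals cannot begin and end with the same interval, and a 4-cycle of touching
  intervals whose opposite intervals differ is a pinwheel: all four meet in one point, two of them
  ending and two starting there.

  In the counterexample G, paths of length three join the opposite corners of the 4-cycles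
  1-2-4-3 and 0-1-2-5, so both are pinwheels. As they share the edge 1-2, the interval of 4 ends
  where the interval of 0 starts or vice versa, and then their common neighbour 9 cannot touch
  both. G is drawn with straight segments, checked in exact arithmetic by orientation signs; it
  contains the 4-cycle 1-2-4-3 and no triangle.
\<close>

section \<open>Planarity and girth\<close>

type_synonym point = "real \<times> real"

definition orientation :: "point \<Rightarrow> point \<Rightarrow> point \<Rightarrow> real" where
  "orientation a b c = (fst b - fst a) * (snd c - snd a) - (snd b - snd a) * (fst c - fst a)"

lemma orientation_swap: "orientation b a c = - orientation a b c"
  by (simp add: orientation_def algebra_simps)

lemma orientation_closed_segment:
  assumes "x \<in> closed_segment c d"
  obtains s where "0 \<le> s" "s \<le> 1" "x = (1 - s) *\<^sub>R c + s *\<^sub>R d"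
    "orientation a b x = (1 - s) * orientation a b c + s * orientation a b d"
proof -
  obtain s where s: "0 \<le> s" "s \<le> 1" "x = (1 - s) *\<^sub>R c + s *\<^sub>R d"
    using assms unfolding in_segment by blast
  moreover have "orientation a b x = (1 - s) * orientation a b c + s * orientation a b d"
    unfolding s(3) orientation_def by (simp add: algebra_simps)
  ultimately show ?thesis using that by blast
qed

lemma orientation_on_segment:
  assumes "x \<in> closed_segment a b"
  shows "orientation a b x = 0"
proof -
  obtain s where "orientation a b x = (1 - s) * orientation a b a + s * orientation a b b"
    using orientation_closed_segment[OF assms] by blast
  then show ?thesis by (simp add: orientation_def)
qed

lemma convex_combination_same_sign_nonzero:
  fixes p q s :: real
  assumes "p * q > 0" "0 \<le> s" "s \<le> 1"
  shows "(1 - s) * p + s * q \<noteq> 0"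
proof -
  have "p * ((1 - s) * p + s * q) = (1 - s) * p\<^sup>2 + s * (p * q)"
    by (simp add: algebra_simps power2_eq_square)
  also have "\<dots> > 0"
  proof (cases "s = 1")
    case True
    then show ?thesis using assms by simp
  next
    case False
    have "p \<noteq> 0" using assms(1) by auto
    then have "(1 - s) * p\<^sup>2 > 0" using False assms(3) by simp
    then show ?thesis using assms by (simp add: add_pos_nonneg)
  qed
  finally show ?thesis by auto
qed

lemma closed_segments_disjoint_same_side:
  assumes "orientation a b c * orientation a b d > 0"
  shows "closed_segment a b \<inter> closed_segment c d = {}"
proof -
  have "orientation a b x \<noteq> 0" if x: "x \<in> closed_segment c d" for x
  proof -
    obtain s where "0 \<le> s" "s \<le> 1"
      and "orientation a b x = (1 - s) * orientation a b c + s * orientation a b d"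
      using orientation_closed_segment[OF x] by metis
    with convex_combination_same_sign_nonzero[OF assms] show ?thesis by simp
  qed
  then show ?thesis using orientation_on_segment by blast
qed

lemma closed_segment_inter_at_shared_end:
  assumes "orientation a b d \<noteq> 0" "c \<in> {a, b}"
  shows "closed_segment a b \<inter> closed_segment c d \<subseteq> {c}"
proof -
  have from_start: "closed_segment a b \<inter> closed_segment a d \<subseteq> {a}"
    if "orientation a b d \<noteq> 0" for a b
  proof
    fix x assume x: "x \<in> closed_segment a b \<inter> closed_segment a d"
    obtain s where x_eq: "x = (1 - s) *\<^sub>R a + s *\<^sub>R d"
      and "orientation a b x = (1 - s) * orientation a b a + s * orientation a b d"
      using x orientation_closed_segment by blast
    moreover have "orientation a b x = 0" "orientation a b a = 0"
      using x orientation_on_segment by (simp_all add: orientation_def)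
    ultimately have "s = 0" using that by simp
    then show "x \<in> {a}" using x_eq by simp
  qed
  show ?thesis
  proof (cases "c = a")
    case True
    then show ?thesis using from_start[OF assms(1)] by simp
  next
    case False
    then have "c = b" using assms(2) by simp
    have "orientation b a d \<noteq> 0" using assms(1) orientation_swap[of b a d] by simp
    then show ?thesis
      using from_start[of b a] \<open>c = b\<close> closed_segment_commute[of a b] by blast
  qed
qed

definition segments_separated :: "point \<Rightarrow> point \<Rightarrow> point \<Rightarrow> point \<Rightarrow> bool" where
  "segments_separated a b c d \<longleftrightarrow>
     orientation a b c * orientation a b d > 0 \<or> orientation c d a * orientation c d b > 0
     \<or> c \<in> {a, b} \<and> orientation a b d \<noteq> 0 \<or> d \<in> {a, b} \<and> orientation a b c \<noteq> 0"

lemma segments_separated_inter: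
  assumes "segments_separated a b c d"
  shows "closed_segment a b \<inter> closed_segment c d \<subseteq> {a, b} \<inter> {c, d}"
  using assms unfolding segments_separated_def
proof (elim disjE conjE)
  assume "orientation a b c * orientation a b d > 0"
  then show ?thesis using closed_segments_disjoint_same_side by blast
next
  assume "orientation c d a * orientation c d b > 0"
  then show ?thesis using closed_segments_disjoint_same_side by blast
next
  assume "c \<in> {a, b}" "orientation a b d \<noteq> 0"
  then show ?thesis using closed_segment_inter_at_shared_end by blast
next
  assume "d \<in> {a, b}" "orientation a b c \<noteq> 0"
  then have "closed_segment a b \<inter> closed_segment d c \<subseteq> {d}"
    using closed_segment_inter_at_shared_end by blast
  then have "closed_segment a b \<inter> closed_segment c d \<subseteq> {d}"
    by (simp only: closed_segment_commute[of c d])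
  then show ?thesis using \<open>d \<in> {a, b}\<close> by blast
qed

lemma planar_by_straight_segments:
  fixes pos :: "'v \<Rightarrow> point"
  assumes "simple_graph V E" "inj_on pos V"
    and vertex_off_edge:
      "\<And>u v w. E u v \<Longrightarrow> w \<in> V \<Longrightarrow> pos w \<in> closed_segment (pos u) (pos v) \<Longrightarrow> w = u \<or> w = v"
    and edges_meet_at_ends:
      "\<And>u v x y. E u v \<Longrightarrow> E x y \<Longrightarrow> {u, v} \<noteq> {x, y} \<Longrightarrow>
         closed_segment (pos u) (pos v) \<inter> closed_segment (pos x) (pos y)
           \<subseteq> {pos u, pos v} \<inter> {pos x, pos y}"
  shows "planar V E"
  unfolding planar_def
proof (intro exI[of _ pos] exI[of _ "\<lambda>u v. linepath (pos u) (pos v)"] conjI allI impI)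
  fix u v assume "E u v"
  then have "u \<in> V" "v \<in> V" "u \<noteq> v"
    using assms(1) unfolding simple_graph_def by blast+
  then show "arc (linepath (pos u) (pos v))"
    using assms(2) by (simp add: arc_linepath inj_on_eq_iff)
qed (use assms(2) vertex_off_edge edges_meet_at_ends in auto)

lemma closed_segment_eq_if_doubleton_eq:
  "{a, b} = {c, d} \<Longrightarrow> closed_segment a b = closed_segment c d"
  by (auto simp: doubleton_eq_iff closed_segment_commute)

lemma girth_is_4I:
  assumes "has_cycle_len V E 4" "\<And>a b c. E a b \<Longrightarrow> E b c \<Longrightarrow> E c a \<Longrightarrow> False"
  shows "girth_is V E 4"
  unfolding girth_is_def
proof (intro conjI allI impI notI)
  fix k :: nat assume "k < 4" and cycle: "has_cycle_len V E k"
  then have "k = 3" unfolding has_cycle_len_def by simp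
  with cycle obtain f where "\<forall>i<3::nat. E (f i) (f ((i + 1) mod 3))"
    unfolding has_cycle_len_def by blast
  note edge = this[rule_format]
  have "E (f 0) (f 1)" "E (f 1) (f 2)" "E (f 2) (f 0)"
    using edge[of 0] edge[of 1] edge[of 2] by (simp_all add: numeral_2_eq_2)
  then show False using assms(2) by blast
qed (use assms(1) in simp)

section \<open>Touching intervals\<close>

definition touching :: "real \<times> real \<Rightarrow> real \<times> real \<Rightarrow> bool" where
  "touching I J \<longleftrightarrow> snd I = fst J \<or> snd J = fst I"

lemma no_common_touching:
  assumes "fst I < snd I" "fst J < snd J" "fst K < snd K" "snd I = fst J"
    and "touching K I" "touching K J"
  shows False
  using assms unfolding touching_def by auto

lemma touching_triangle_free:
  assumes "fst I < snd I" "fst J < snd J" "fst K < snd K"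
    and "touching I J" "touching J K" "touching K I"
  shows False
  using assms no_common_touching[of I J K] no_common_touching[of J I K]
  unfolding touching_def by blast

lemma touching_path_ends_distinct:
  assumes "fst W < snd W" "fst X < snd X" "fst Y < snd Y"
    and "touching W X" "touching X Y" "touching Y Z"
  shows "W \<noteq> Z"
  using assms touching_triangle_free[of W X Y] by blast

lemma touching_4_cycle:
  assumes "fst I1 < snd I1" "fst I2 < snd I2" "fst I3 < snd I3" "fst I4 < snd I4"
    and "touching I1 I2" "touching I2 I3" "touching I3 I4" "touching I4 I1"
    and "I1 \<noteq> I3" "I2 \<noteq> I4"
  shows "snd I1 = fst I2 \<and> snd I3 = fst I2 \<and> fst I4 = fst I2
    \<or> fst I1 = snd I2 \<and> fst I3 = snd I2 \<and> snd I4 = snd I2"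
proof -
  have "fst I1 \<noteq> fst I3 \<or> snd I1 \<noteq> snd I3" "fst I2 \<noteq> fst I4 \<or> snd I2 \<noteq> snd I4"
    using assms(9,10) by (auto simp: prod_eq_iff)
  then show ?thesis
    using assms(5-8) unfolding touching_def
    by (elim disjE; use assms(1-4) in linarith)
qed

lemma cbox_d_inter_facet_touching:
  assumes "1 \<le> d" "lo1 0 < hi1 0" "lo2 0 < hi2 0"
    and nonempty: "cbox_d d lo1 hi1 \<inter> cbox_d d lo2 hi2 \<noteq> {}"
    and facet: "facet_box_e1 d (cbox_d d lo1 hi1 \<inter> cbox_d d lo2 hi2)"
  shows "touching (lo1 0, hi1 0) (lo2 0, hi2 0)"
proof -
  obtain z where z1: "z \<in> cbox_d d lo1 hi1" and z2: "z \<in> cbox_d d lo2 hi2"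
    using nonempty by blast
  obtain a b where "a 0 = b 0" and inter: "cbox_d d lo1 hi1 \<inter> cbox_d d lo2 hi2 = cbox_d d a b"
    using facet unfolding facet_box_e1_def by blast
  have "0 < d" using assms(1) by simp
  have level: "t = a 0" if "lo1 0 \<le> t" "t \<le> hi1 0" "lo2 0 \<le> t" "t \<le> hi2 0" for t
  proof -
    have "z(0 := t) \<in> cbox_d d lo1 hi1 \<inter> cbox_d d lo2 hi2"
      using z1 z2 that \<open>0 < d\<close> unfolding cbox_d_def by auto
    then have "z(0 := t) \<in> cbox_d d a b"
      unfolding inter .
    then have "a 0 \<le> t \<and> t \<le> b 0"
      using \<open>0 < d\<close> unfolding cbox_d_def by auto
    then show ?thesis using \<open>a 0 = b 0\<close> by linarith
  qed
  have "lo1 0 \<le> z 0" "z 0 \<le> hi1 0" "lo2 0 \<le> z 0" "z 0 \<le> hi2 0"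
    using z1 z2 \<open>0 < d\<close> unfolding cbox_d_def by auto
  then have "max (lo1 0) (lo2 0) = a 0" "min (hi1 0) (hi2 0) = a 0"
    by (auto intro!: level)
  then show ?thesis
    using assms(2,3) unfolding touching_def
    by (cases "lo1 0 \<le> lo2 0"; cases "hi1 0 \<le> hi2 0") (simp_all add: max_def min_def)
qed

lemma d_CBU_touching_intervals:
  assumes "d_CBU d V E" "1 \<le> d"
  obtains I where "\<forall>v\<in>V. fst (I v) < snd (I v)"
    and "\<forall>u\<in>V. \<forall>v\<in>V. u \<noteq> v \<longrightarrow> E u v \<longrightarrow> touching (I u) (I v)"
proof -
  obtain lo hi where proper: "\<forall>v\<in>V. \<forall>i<d. lo v i < hi v i"
    and adj: "\<forall>u\<in>V. \<forall>v\<in>V. u \<noteq> v \<longrightarrow>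
      (E u v \<longleftrightarrow> cbox_d d (lo u) (hi u) \<inter> cbox_d d (lo v) (hi v) \<noteq> {})"
    and facet: "\<forall>u\<in>V. \<forall>v\<in>V.
      u \<noteq> v \<and> cbox_d d (lo u) (hi u) \<inter> cbox_d d (lo v) (hi v) \<noteq> {} \<longrightarrow>
          facet_box_e1 d (cbox_d d (lo u) (hi u) \<inter> cbox_d d (lo v) (hi v))"
    using assms(1) unfolding d_CBU_def by (elim exE conjE) (rule that; assumption)
  show ?thesis
  proof (rule that[of "\<lambda>v. (lo v 0, hi v 0)"])
    show "\<forall>v\<in>V. fst (lo v 0, hi v 0) < snd (lo v 0, hi v 0)"
      using proper assms(2) by auto
    show "\<forall>u\<in>V. \<forall>v\<in>V. u \<noteq> v \<longrightarrow> E u v \<longrightarrow> touching (lo u 0, hi u 0) (lo v 0, hi v 0)"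
    proof (intro ballI impI)
      fix u v assume "u \<in> V" "v \<in> V" "u \<noteq> v" "E u v"
      then have "cbox_d d (lo u) (hi u) \<inter> cbox_d d (lo v) (hi v) \<noteq> {}"
        using adj by blast
      moreover have "lo u 0 < hi u 0" "lo v 0 < hi v 0"
        using proper assms(2) \<open>u \<in> V\<close> \<open>v \<in> V\<close> by auto
      ultimately show "touching (lo u 0, hi u 0) (lo v 0, hi v 0)"
        using cbox_d_inter_facet_touching[OF assms(2)] facet \<open>u \<in> V\<close> \<open>v \<in> V\<close> \<open>u \<noteq> v\<close>
        by blast
    qed
  qed
qed

section \<open>The counterexample\<close>

definition G_vertices :: "nat set" where
  "G_vertices = {..<11}"

definition G_edge_list :: "(nat \<times> nat) list" where
  "G_edge_list = [(0,1), (0,5), (0,9), (1,2), (1,3), (1,10), (2,4), (2,5), (2,7), (3,4), (3,6),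
     (4,9), (5,8), (6,7), (8,10)]"

definition G_adj :: "nat \<Rightarrow> nat \<Rightarrow> bool" where
  "G_adj u v \<longleftrightarrow> (u, v) \<in> set G_edge_list \<or> (v, u) \<in> set G_edge_list"

definition G_pos :: "nat \<Rightarrow> point" where
  "G_pos v = [(-10, -12), (0, 0), (20, 0), (0, 20), (20, 20), (10, -20), (8, 15), (14, 8), (7, -10),
     (-10, 30), (3, -5)] ! v"

lemma G_vertices_eq: "G_vertices = {0, 1, 2, 3, 4, 5, 6, 7, 8, 9, 10}"
  unfolding G_vertices_def by (simp add: lessThan_nat_numeral lessThan_Suc insert_commute)

lemma G_simple: "simple_graph G_vertices G_adj"
  unfolding simple_graph_def G_adj_def G_edge_list_def G_vertices_def by auto

lemma G_pos_inj: "inj_on G_pos G_vertices"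
  unfolding inj_on_def G_vertices_eq G_pos_def by simp

lemma G_edges_separated:
  assumes "p \<in> set G_edge_list" "q \<in> set G_edge_list" "p \<noteq> q"
  shows "segments_separated (G_pos (fst p)) (G_pos (snd p)) (G_pos (fst q)) (G_pos (snd q))"
  using assms unfolding G_edge_list_def
  by (simp only: list.set insert_iff empty_iff)
    (elim disjE; simp add: segments_separated_def orientation_def G_pos_def)

lemma G_vertices_off_edges:
  assumes "(u, v) \<in> set G_edge_list" "w \<in> G_vertices" "w \<noteq> u" "w \<noteq> v"
  shows "orientation (G_pos u) (G_pos v) (G_pos w) \<noteq> 0"
  using assms unfolding G_edge_list_def G_vertices_eq
  by (simp only: list.set insert_iff empty_iff prod.inject)
    (elim disjE conjE; simp add: orientation_def G_pos_def)

lemma G_adj_edge_list: "G_adj u v \<Longrightarrow> \<exists>p\<in>set G_edge_list. {fst p, snd p} = {u, v}"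
  unfolding G_adj_def by force

lemma G_planar: "planar G_vertices G_adj"
proof (rule planar_by_straight_segments[OF G_simple G_pos_inj])
  fix u v w
  assume "G_adj u v" "w \<in> G_vertices" and w: "G_pos w \<in> closed_segment (G_pos u) (G_pos v)"
  moreover have "orientation (G_pos u) (G_pos v) (G_pos w) = 0"
    "orientation (G_pos v) (G_pos u) (G_pos w) = 0"
    using w orientation_on_segment closed_segment_commute by metis+
  ultimately show "w = u \<or> w = v"
    unfolding G_adj_def using G_vertices_off_edges by blast
next
  fix u v x y
  assume "G_adj u v" "G_adj x y" "{u, v} \<noteq> {x, y}"
  then obtain p q where p: "p \<in> set G_edge_list" "{fst p, snd p} = {u, v}"
    and q: "q \<in> set G_edge_list" "{fst q, snd q} = {x, y}" and "p \<noteq> q"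
    using G_adj_edge_list by metis
  then have "closed_segment (G_pos (fst p)) (G_pos (snd p))
      \<inter> closed_segment (G_pos (fst q)) (G_pos (snd q))
      \<subseteq> {G_pos (fst p), G_pos (snd p)} \<inter> {G_pos (fst q), G_pos (snd q)}"
    using segments_separated_inter G_edges_separated by blast
  moreover have "{G_pos (fst p), G_pos (snd p)} = {G_pos u, G_pos v}"
    "{G_pos (fst q), G_pos (snd q)} = {G_pos x, G_pos y}"
    using arg_cong[OF p(2), of "image G_pos"] arg_cong[OF q(2), of "image G_pos"] by simp_all
  ultimately show "closed_segment (G_pos u) (G_pos v) \<inter> closed_segment (G_pos x) (G_pos y)
      \<subseteq> {G_pos u, G_pos v} \<inter> {G_pos x, G_pos y}"
    using closed_segment_eq_if_doubleton_eq by metis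
qed

lemma G_adj_sym: "G_adj u v \<longleftrightarrow> G_adj v u"
  unfolding G_adj_def by blast

lemma G_triangle_free:
  assumes "G_adj a b" "G_adj b c" "G_adj c a"
  shows False
proof -
  have False if "(a, b) \<in> set G_edge_list" "G_adj b c" "G_adj c a" for a b c
    using that unfolding G_edge_list_def
    by (simp only: list.set insert_iff prod.inject empty_iff)
      (elim disjE conjE; auto simp: G_adj_def G_edge_list_def)
  then show False using assms G_adj_sym unfolding G_adj_def[of a b] by metis
qed

lemma G_has_4_cycle: "has_cycle_len G_vertices G_adj 4"
proof -
  have below_4: "i = 0 \<or> i = 1 \<or> i = 2 \<or> i = 3" if "i < 4" for i :: nat
    using that by auto
  let ?f = "nth [1, 2, 4, 3 :: nat]"
  have "{..<4} = {0, 1, 2, 3 :: nat}"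
    using below_4 by auto
  then have "inj_on ?f {..<4}" by simp
  moreover have "?f i \<in> G_vertices \<and> G_adj (?f i) (?f ((i + 1) mod 4))" if "i < 4" for i
    using below_4[OF that] by (elim disjE) (simp_all add: G_vertices_def G_adj_def G_edge_list_def)
  ultimately show ?thesis unfolding has_cycle_len_def by (intro conjI exI[of _ ?f]) auto
qed

lemma G_girth: "girth_is G_vertices G_adj 4"
  using G_has_4_cycle G_triangle_free by (rule girth_is_4I)

lemma G_no_touching_intervals:
  assumes proper: "\<forall>v\<in>G_vertices. fst (I v) < snd (I v)"
    and edges: "\<And>u v. G_adj u v \<Longrightarrow> touching (I u) (I v)"
  shows False
proof -
  have "fst (I v) < snd (I v)" if "v \<le> 10" for v
    using proper that by (simp add: G_vertices_def)
  then have I0: "fst (I 0) < snd (I 0)" and I1: "fst (I 1) < snd (I 1)"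
    and I2: "fst (I 2) < snd (I 2)" and I3: "fst (I 3) < snd (I 3)"
    and I4: "fst (I 4) < snd (I 4)" and I5: "fst (I 5) < snd (I 5)"
    and I6: "fst (I 6) < snd (I 6)" and I7: "fst (I 7) < snd (I 7)"
    and I8: "fst (I 8) < snd (I 8)" and I9: "fst (I 9) < snd (I 9)"
    and I10: "fst (I 10) < snd (I 10)"
    by simp_all
  note touch = edges G_adj_def G_edge_list_def
  have "I 1 \<noteq> I 4"
    by (rule touching_path_ends_distinct[OF I1 I0 I9]) (simp_all add: touch)
  moreover have "I 2 \<noteq> I 3"
    by (rule touching_path_ends_distinct[OF I2 I7 I6]) (simp_all add: touch)
  ultimately have pinwheel_1243:
    "snd (I 1) = fst (I 2) \<and> snd (I 4) = fst (I 2) \<and> fst (I 3) = fst (I 2)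
     \<or> fst (I 1) = snd (I 2) \<and> fst (I 4) = snd (I 2) \<and> snd (I 3) = snd (I 2)"
    by (intro touching_4_cycle[OF I1 I2 I4 I3]) (simp_all add: touch)
  have "I 0 \<noteq> I 2"
    by (rule touching_path_ends_distinct[OF I0 I9 I4]) (simp_all add: touch)
  moreover have "I 1 \<noteq> I 5"
    by (rule touching_path_ends_distinct[OF I1 I10 I8]) (simp_all add: touch)
  ultimately have pinwheel_0125:
    "snd (I 0) = fst (I 1) \<and> snd (I 2) = fst (I 1) \<and> fst (I 5) = fst (I 1)
     \<or> fst (I 0) = snd (I 1) \<and> fst (I 2) = snd (I 1) \<and> snd (I 5) = snd (I 1)"
    by (intro touching_4_cycle[OF I0 I1 I2 I5]) (simp_all add: touch)
  have "snd (I 4) = fst (I 0) \<or> snd (I 0) = fst (I 4)"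
    using pinwheel_1243 pinwheel_0125 I1 I2 by linarith
  moreover have "touching (I 9) (I 4)" "touching (I 9) (I 0)"
    by (simp_all add: touch)
  ultimately show False
    using no_common_touching[OF I4 I0 I9] no_common_touching[OF I0 I4 I9] by blast
qed

lemma G_not_CBU: "\<not> CBU G_vertices G_adj"
proof
  assume "CBU G_vertices G_adj"
  then obtain d where "1 \<le> d" "d_CBU d G_vertices G_adj"
    unfolding CBU_def by blast
  then obtain I where proper: "\<forall>v\<in>G_vertices. fst (I v) < snd (I v)"
    and touch: "\<forall>u\<in>G_vertices. \<forall>v\<in>G_vertices. u \<noteq> v \<longrightarrow> G_adj u v \<longrightarrow> touching (I u) (I v)"
    using d_CBU_touching_intervals by blast
  have "touching (I u) (I v)" if "G_adj u v" for u v
  proof -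
    have "u \<in> G_vertices" "v \<in> G_vertices" "u \<noteq> v"
      using that G_simple unfolding simple_graph_def by metis+
    then show ?thesis using touch that by blast
  qed
  then show False
    using G_no_touching_intervals proper by blast
qed

theorem mainTheorem6:
  shows "\<exists>(V :: nat set) E. simple_graph V E \<and> planar V E \<and> girth_is V E 4 \<and> \<not> CBU V E"
  using G_simple G_planar G_girth G_not_CBU by (intro exI conjI)

end
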